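(* Let $\Gamma$ be a finite connected $4$-valent graph of girth at least $5$ and let $g$ be an automorphism of $\Gamma$. Then $$2|F(\Gamma,g)|+4|V_1(\Gamma,g)|+3|V_2(\Gamma,g)|+|V_4(\Gamma,g)|\le|V\Gamma|.$$
   Context: For an automorphism $g$ of a $4$-valent graph $\Gamma$: $A(\Gamma,g)$ is the set of edges $\{a,b\}$ with $a^g=a$ and $b^g=b$; $F(\Gamma,g)$ is the set of edges $\{a,b\}$ with $a^g=b$ and $b^g=a$, $a\neq b$. $\Gamma[g]$ is the subgraph with edge set $A(\Gamma,g)$ and vertex set the vertices incident to edges of $A(\Gamma,g)$; its vertices have valency $1$, $2$ or $4$ in $\Gamma[g]$, and $V_i(\Gamma,g)$ is the set of vertices of $\Gamma[g]$ of valency $i$ in $\Gamma[g]$, for $i\in\{1,2,4\}$. *)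

theory Defs
  imports Main
begin

definition simple_graph :: "'a set \<Rightarrow> 'a set set \<Rightarrow> bool" where
  "simple_graph V E \<longleftrightarrow> (\<forall>e\<in>E. \<exists>a b. e = {a, b} \<and> a \<noteq> b \<and> a \<in> V \<and> b \<in> V)"

definition degree :: "'a set set \<Rightarrow> 'a \<Rightarrow> nat" where
  "degree E v = card {e\<in>E. v \<in> e}"

definition regular_of :: "nat \<Rightarrow> 'a set \<Rightarrow> 'a set set \<Rightarrow> bool" where
  "regular_of k V E \<longleftrightarrow> (\<forall>v\<in>V. degree E v = k)"

definition adj_rel :: "'a set set \<Rightarrow> ('a \<times> 'a) set" where
  "adj_rel E = {(u, v). {u, v} \<in> E}"

definition connected_graph :: "'a set \<Rightarrow> 'a set set \<Rightarrow> bool" where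
  "connected_graph V E \<longleftrightarrow> (\<forall>u\<in>V. \<forall>v\<in>V. (u, v) \<in> (adj_rel E)\<^sup>*)"

definition is_cycle :: "'a set set \<Rightarrow> 'a list \<Rightarrow> bool" where
  "is_cycle E cs \<longleftrightarrow> length cs \<ge> 3 \<and> distinct cs \<and>
     (\<forall>i < length cs. {cs ! i, cs ! ((i + 1) mod length cs)} \<in> E)"

definition girth_at_least :: "nat \<Rightarrow> 'a set set \<Rightarrow> bool" where
  "girth_at_least k E \<longleftrightarrow> (\<forall>cs. is_cycle E cs \<longrightarrow> length cs \<ge> k)"

definition graph_automorphism :: "'a set \<Rightarrow> 'a set set \<Rightarrow> ('a \<Rightarrow> 'a) \<Rightarrow> bool" where
  "graph_automorphism V E g \<longleftrightarrow> bij_betw g V V \<and>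
     (\<forall>a\<in>V. \<forall>b\<in>V. {a, b} \<in> E \<longleftrightarrow> {g a, g b} \<in> E)"

definition fixed_edges :: "'a set set \<Rightarrow> ('a \<Rightarrow> 'a) \<Rightarrow> 'a set set" where
  "fixed_edges E g = {e\<in>E. \<exists>a b. e = {a, b} \<and> g a = a \<and> g b = b}"

definition flipped_edges :: "'a set set \<Rightarrow> ('a \<Rightarrow> 'a) \<Rightarrow> 'a set set" where
  "flipped_edges E g = {e\<in>E. \<exists>a b. e = {a, b} \<and> a \<noteq> b \<and> g a = b \<and> g b = a}"

definition fixed_subgraph_vertices :: "nat \<Rightarrow> 'a set set \<Rightarrow> ('a \<Rightarrow> 'a) \<Rightarrow> 'a set" where
  "fixed_subgraph_vertices i E g =
     {v \<in> \<Union>(fixed_edges E g). card {e \<in> fixed_edges E g. v \<in> e} = i}"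

end

theory Submission imports Defs begin

text \<open>For a vertex v of \<Gamma>[g] let S(v) consist of v and its neighbours moved by g; it has
  5 - val(v) elements. Two such sets are disjoint, since a common element w would give the
  4-cycle u w v w^g, and each is disjoint from every flipped edge {x, x^g}, which would
  otherwise close the triangle v x x^g. The flipped edges are pairwise disjoint as well, so
  all these sets fit disjointly into V\<Gamma>.\<close>

definition moved_neighbours :: "'a set set \<Rightarrow> ('a \<Rightarrow> 'a) \<Rightarrow> 'a \<Rightarrow> 'a set" where
  "moved_neighbours E g v = {w. {v, w} \<in> E \<and> g w \<noteq> w}"

definition moved_star :: "'a set set \<Rightarrow> ('a \<Rightarrow> 'a) \<Rightarrow> 'a \<Rightarrow> 'a set" where
  "moved_star E g v = insert v (moved_neighbours E g v)"

lemma is_cycle_triangle: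
  assumes "distinct [a, b, c]" "{a, b} \<in> E" "{b, c} \<in> E" "{c, a} \<in> E"
  shows "is_cycle E [a, b, c]"
  using assms by (auto simp: is_cycle_def less_Suc_eq)

lemma is_cycle_square:
  assumes "distinct [a, b, c, d]" "{a, b} \<in> E" "{b, c} \<in> E" "{c, d} \<in> E" "{d, a} \<in> E"
  shows "is_cycle E [a, b, c, d]"
  using assms by (auto simp: is_cycle_def less_Suc_eq)

lemma girth_at_least_4_no_triangle:
  assumes "girth_at_least 4 E" "distinct [a, b, c]" "{a, b} \<in> E" "{b, c} \<in> E" "{c, a} \<in> E"
  shows False
  using assms is_cycle_triangle[OF assms(2-)] by (fastforce simp: girth_at_least_def)

lemma girth_at_least_5_no_square:
  assumes "girth_at_least 5 E" "distinct [a, b, c, d]"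
    "{a, b} \<in> E" "{b, c} \<in> E" "{c, d} \<in> E" "{d, a} \<in> E"
  shows False
  using assms is_cycle_square[OF assms(2-)] by (fastforce simp: girth_at_least_def)

lemma girth_at_least_mono: "girth_at_least k E \<Longrightarrow> j \<le> k \<Longrightarrow> girth_at_least j E"
  by (fastforce simp: girth_at_least_def)

lemma simple_graph_edgeD:
  assumes "simple_graph V E" "{a, b} \<in> E"
  shows "a \<in> V" "b \<in> V" "a \<noteq> b"
  using assms unfolding simple_graph_def by (metis doubleton_eq_iff)+

lemma simple_graph_finite_edges:
  assumes "simple_graph V E" "finite V"
  shows "finite E"
proof -
  have "E \<subseteq> Pow V"
  proof
    fix e assume "e \<in> E"
    then obtain a b where "e = {a, b}" "a \<in> V" "b \<in> V"
      using assms(1) unfolding simple_graph_def by meson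
    thus "e \<in> Pow V" by simp
  qed
  thus ?thesis using assms(2) by (simp add: finite_subset)
qed

lemma finite_neighbours:
  assumes "simple_graph V E" "finite V"
  shows "finite {w. {v, w} \<in> E}"
proof -
  have "{w. {v, w} \<in> E} \<subseteq> V" using simple_graph_edgeD(2)[OF assms(1)] by blast
  thus ?thesis using assms(2) by (rule finite_subset)
qed

lemma automorphism_edge:
  assumes "graph_automorphism V E g" "simple_graph V E" "{a, b} \<in> E"
  shows "{g a, g b} \<in> E"
proof -
  have "a \<in> V" "b \<in> V" using simple_graph_edgeD[OF assms(2,3)] by auto
  thus ?thesis using assms(1,3) unfolding graph_automorphism_def by simp
qed

lemma automorphism_eq_iff:
  assumes "graph_automorphism V E g" "a \<in> V" "b \<in> V"
  shows "g a = g b \<longleftrightarrow> a = b"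
  using assms unfolding graph_automorphism_def bij_betw_def by (auto dest: inj_onD)

lemma card_neighbours_eq_card_incident:
  assumes "\<forall>e\<in>S. \<exists>a b. e = {a, b}"
  shows "card {w. {v, w} \<in> S} = card {e\<in>S. v \<in> e}"
proof (rule bij_betw_same_card[of "\<lambda>w. {v, w}"], rule bij_betwI')
  show "({v, x} = {v, y}) = (x = y)" for x y by (metis doubleton_eq_iff)
  show "{v, w} \<in> {e\<in>S. v \<in> e}" if "w \<in> {w. {v, w} \<in> S}" for w using that by simp
  fix e assume e: "e \<in> {e\<in>S. v \<in> e}"
  then obtain a b where ab: "e = {a, b}" using assms by blast
  with e have "e = {v, b} \<or> e = {v, a}" by (auto simp: insert_commute)
  with e show "\<exists>w\<in>{w. {v, w} \<in> S}. e = {v, w}" by auto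
qed

lemma fixed_subgraph_verticesD:
  assumes "simple_graph V E" "v \<in> fixed_subgraph_vertices i E g"
  shows "v \<in> V" "g v = v" "card {e \<in> fixed_edges E g. v \<in> e} = i"
  using assms simple_graph_edgeD[OF assms(1)]
  unfolding fixed_subgraph_vertices_def fixed_edges_def by blast+

lemma fixed_edge_iff:
  assumes "g v = v"
  shows "{v, w} \<in> fixed_edges E g \<longleftrightarrow> {v, w} \<in> E \<and> g w = w"
  using assms unfolding fixed_edges_def by (auto simp: doubleton_eq_iff)

lemma card_moved_neighbours:
  assumes "simple_graph V E" "finite V" "g v = v"
  shows "card (moved_neighbours E g v) = degree E v - card {e \<in> fixed_edges E g. v \<in> e}"
proof -
  have "{w. {v, w} \<in> E \<and> g w = w} = {w. {v, w} \<in> fixed_edges E g}"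
    using fixed_edge_iff[of g v] assms(3) by blast
  also have "card \<dots> = card {e \<in> fixed_edges E g. v \<in> e}"
    by (rule card_neighbours_eq_card_incident) (auto simp: fixed_edges_def)
  finally have fixed: "card {w. {v, w} \<in> E \<and> g w = w} = card {e \<in> fixed_edges E g. v \<in> e}" .
  have all: "card {w. {v, w} \<in> E} = degree E v"
    using card_neighbours_eq_card_incident[of E v] assms(1)
    unfolding simple_graph_def degree_def by blast
  have fin: "finite {w. {v, w} \<in> E \<and> g w = w}"
    using finite_neighbours[OF assms(1,2), of v] by (rule finite_subset[rotated]) blast
  have "moved_neighbours E g v = {w. {v, w} \<in> E} - {w. {v, w} \<in> E \<and> g w = w}"
    unfolding moved_neighbours_def by blast
  also have "card \<dots> = degree E v - card {e \<in> fixed_edges E g. v \<in> e}"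
    using card_Diff_subset[OF fin, of "{w. {v, w} \<in> E}"] unfolding fixed all by blast
  finally show ?thesis .
qed

lemma card_moved_star:
  assumes "simple_graph V E" "finite V" "regular_of k V E" "v \<in> fixed_subgraph_vertices i E g"
  shows "card (moved_star E g v) = Suc k - i"
proof -
  note v = fixed_subgraph_verticesD[OF assms(1,4)]
  have "i \<le> k"
  proof -
    have "{e \<in> fixed_edges E g. v \<in> e} \<subseteq> {e \<in> E. v \<in> e}" by (auto simp: fixed_edges_def)
    hence "card {e \<in> fixed_edges E g. v \<in> e} \<le> degree E v"
      unfolding degree_def by (rule card_mono[rotated]) (use simple_graph_finite_edges[OF assms(1,2)] in simp)
    hence "i \<le> degree E v" using v(3) by simp
    thus ?thesis using v(1) assms(3) unfolding regular_of_def by simp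
  qed
  have "v \<notin> moved_neighbours E g v" "finite (moved_neighbours E g v)"
    using v finite_neighbours[OF assms(1,2), of v]
    unfolding moved_neighbours_def by (auto intro: finite_subset)
  hence "card (moved_star E g v) = Suc (card (moved_neighbours E g v))"
    unfolding moved_star_def by simp
  also have "card (moved_neighbours E g v) = k - i"
    using card_moved_neighbours[of V E g v, OF assms(1,2) v(2)] v(1,3) assms(3)
    unfolding regular_of_def by simp
  finally show ?thesis using \<open>i \<le> k\<close> by simp
qed

lemma moved_star_subset:
  assumes "simple_graph V E" "v \<in> V"
  shows "moved_star E g v \<subseteq> V"
  using assms simple_graph_edgeD(2)[OF assms(1)] unfolding moved_star_def moved_neighbours_def by blast

lemma finite_fixed_subgraph_vertices:
  assumes "simple_graph V E" "finite V"
  shows "finite (fixed_subgraph_vertices i E g)"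
  using assms(2) by (rule finite_subset[rotated]) (use fixed_subgraph_verticesD(1)[OF assms(1)] in blast)

lemma fixed_subgraph_vertices_unique:
  "v \<in> fixed_subgraph_vertices i E g \<Longrightarrow> v \<in> fixed_subgraph_vertices j E g \<Longrightarrow> i = j"
  unfolding fixed_subgraph_vertices_def by simp

lemma sum_card_moved_star:
  assumes "simple_graph V E" "finite V" "regular_of k V E"
  shows "(\<Sum>v\<in>fixed_subgraph_vertices i E g. card (moved_star E g v))
           = (Suc k - i) * card (fixed_subgraph_vertices i E g)"
  using card_moved_star[OF assms] by simp

lemma moved_stars_disjoint:
  assumes "graph_automorphism V E g" "simple_graph V E" "girth_at_least 5 E"
    and "u \<in> V" "v \<in> V" "g u = u" "g v = v" "u \<noteq> v"
  shows "moved_star E g u \<inter> moved_star E g v = {}"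
proof (rule ccontr)
  assume "moved_star E g u \<inter> moved_star E g v \<noteq> {}"
  then obtain w where "w \<in> moved_star E g u" "w \<in> moved_star E g v" by blast
  with assms(6-8) have uw: "{u, w} \<in> E" and vw: "{v, w} \<in> E" and moved: "g w \<noteq> w"
    unfolding moved_star_def moved_neighbours_def by auto
  have "w \<in> V" using simple_graph_edgeD[OF assms(2) uw] by simp
  have "{u, g w} \<in> E" "{v, g w} \<in> E"
    using automorphism_edge[OF assms(1,2) uw] automorphism_edge[OF assms(1,2) vw] assms(6,7) by simp_all
  moreover have "g w \<noteq> u" "g w \<noteq> v"
    using automorphism_eq_iff[OF assms(1) \<open>w \<in> V\<close>] assms(4-7) moved by metis+
  moreover have "w \<noteq> u" "w \<noteq> v" using moved assms(6,7) by auto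
  ultimately have "distinct [u, w, v, g w]" "{w, v} \<in> E" "{g w, u} \<in> E"
    using moved vw assms(8) by (auto simp: insert_commute)
  thus False using girth_at_least_5_no_square[OF assms(3)] uw \<open>{v, g w} \<in> E\<close> by blast
qed

lemma flipped_edge_eq:
  assumes "e \<in> flipped_edges E g" "x \<in> e"
  shows "e = {x, g x}" "g x \<noteq> x" "e \<in> E"
  using assms unfolding flipped_edges_def by auto

lemma moved_star_disjoint_flipped_edge:
  assumes "graph_automorphism V E g" "simple_graph V E" "girth_at_least 4 E"
    and "v \<in> V" "g v = v" "e \<in> flipped_edges E g"
  shows "moved_star E g v \<inter> e = {}"
proof (rule ccontr)
  assume "moved_star E g v \<inter> e \<noteq> {}"
  then obtain x where "x \<in> moved_star E g v" "x \<in> e" by blast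
  note flip = flipped_edge_eq[OF assms(6) \<open>x \<in> e\<close>]
  have vx: "{v, x} \<in> E"
    using \<open>x \<in> moved_star E g v\<close> flip(2) assms(5) unfolding moved_star_def moved_neighbours_def by auto
  have "x \<in> V" using simple_graph_edgeD[OF assms(2) vx] by simp
  have "{g x, v} \<in> E" using automorphism_edge[OF assms(1,2) vx] assms(5) by (simp add: insert_commute)
  moreover have "g x \<noteq> v" using automorphism_eq_iff[OF assms(1) \<open>x \<in> V\<close> assms(4)] assms(5) flip(2) by metis
  moreover have "x \<noteq> v" using flip(2) assms(5) by auto
  ultimately show False
    using girth_at_least_4_no_triangle[OF assms(3), of v x "g x"] vx flip(1,2,3) by auto
qed

lemma Union_flipped_edges_subset:
  assumes "simple_graph V E"
  shows "\<Union>(flipped_edges E g) \<subseteq> V"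
  using simple_graph_edgeD(1)[OF assms] flipped_edge_eq(1,3) by (metis UnionE subsetI)

lemma card_Union_flipped_edges:
  "card (\<Union>(flipped_edges E g)) = 2 * card (flipped_edges E g)"
proof -
  have card2: "card e = 2" if "e \<in> flipped_edges E g" for e
    using that unfolding flipped_edges_def by auto
  have "pairwise disjnt (flipped_edges E g)"
    unfolding pairwise_def disjnt_def by (metis disjoint_iff flipped_edge_eq(1))
  hence "card (\<Union>(flipped_edges E g)) = (\<Sum>e\<in>flipped_edges E g. card e)"
    by (rule card_Union_disjoint) (use card2 card.infinite in fastforce)
  also have "\<dots> = 2 * card (flipped_edges E g)" by (simp add: card2)
  finally show ?thesis .
qed

lemma card_Union_moved_stars:
  assumes "graph_automorphism V E g" "simple_graph V E" "girth_at_least 5 E" "finite V"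
    and "U \<subseteq> V" "\<forall>v\<in>U. g v = v"
  shows "card (\<Union>v\<in>U. moved_star E g v) = (\<Sum>v\<in>U. card (moved_star E g v))"
proof (rule card_UN_disjoint)
  show "finite U" using assms(4,5) by (rule finite_subset[rotated])
  show "\<forall>v\<in>U. finite (moved_star E g v)"
    using moved_star_subset[OF assms(2)] assms(4,5) by (meson finite_subset subsetD)
  show "\<forall>u\<in>U. \<forall>v\<in>U. u \<noteq> v \<longrightarrow> moved_star E g u \<inter> moved_star E g v = {}"
    using moved_stars_disjoint[OF assms(1-3)] assms(5,6) by blast
qed

theorem lemma4p3:
  fixes V :: "'a set" and E :: "'a set set" and g :: "'a \<Rightarrow> 'a"
  assumes "finite V"
    and "simple_graph V E"
    and "connected_graph V E"
    and "regular_of 4 V E"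
    and "girth_at_least 5 E"
    and "graph_automorphism V E g"
  shows "2 * card (flipped_edges E g) + 4 * card (fixed_subgraph_vertices 1 E g)
           + 3 * card (fixed_subgraph_vertices 2 E g) + card (fixed_subgraph_vertices 4 E g)
         \<le> card V"
proof -
  let ?V = "\<lambda>i. fixed_subgraph_vertices i E g"
  define W where "W = ?V 1 \<union> ?V 2 \<union> ?V 4"
  define Stars where "Stars = (\<Union>v\<in>W. moved_star E g v)"
  define Flips where "Flips = \<Union>(flipped_edges E g)"
  have W: "W \<subseteq> V" "\<forall>v\<in>W. g v = v"
    unfolding W_def using fixed_subgraph_verticesD[OF assms(2)] by blast+
  have "card Stars = (\<Sum>v\<in>W. card (moved_star E g v))"
    unfolding Stars_def by (rule card_Union_moved_stars[OF assms(6,2,5,1) W])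
  also have "\<dots> = 4 * card (?V 1) + 3 * card (?V 2) + card (?V 4)"
  proof -
    have fin: "finite (?V i)" for i by (rule finite_fixed_subgraph_vertices[OF assms(2,1)])
    have disj: "?V i \<inter> ?V j = {}" if "i \<noteq> j" for i j
      using that by (blast dest: fixed_subgraph_vertices_unique)
    show ?thesis unfolding W_def
      by (simp add: sum.union_disjoint fin disj Int_Un_distrib2 sum_card_moved_star[OF assms(2,1,4)])
  qed
  finally have card_Stars: "card Stars = 4 * card (?V 1) + 3 * card (?V 2) + card (?V 4)" .
  have "girth_at_least 4 E" using girth_at_least_mono[OF assms(5)] by simp
  hence "Flips \<inter> Stars = {}"
    using moved_star_disjoint_flipped_edge[OF assms(6,2)] W
    unfolding Flips_def Stars_def by blast
  moreover have "Flips \<subseteq> V" "Stars \<subseteq> V"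
    unfolding Flips_def Stars_def
    using Union_flipped_edges_subset[OF assms(2)] moved_star_subset[OF assms(2)] W(1) by blast+
  ultimately have "card Flips + card Stars \<le> card V"
    using assms(1) by (metis card_Un_disjoint card_mono finite_Un finite_subset le_sup_iff)
  thus ?thesis
    unfolding Flips_def card_Stars card_Union_flipped_edges by simp
qed

end
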